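(* Let $\operatorname{Li}_s(z)=\sum_{m=1}^\infty \frac{z^m}{m^s}$ denote the polylogarithm and $\zeta$ the Riemann zeta function. Then $$\int_0^1 \frac{\operatorname{Li}_4(-x)}{1 + x}\,dx = \frac{17}{16}\zeta (5) -\frac{3}{8}\zeta(2)\zeta(3) -\frac{7}{8}\log(2)\zeta(4).$$ *)

theory Defs
  imports "HOL-Analysis.Analysis"
begin

text \<open>Polylogarithm of integer order s, for real argument with |z| \<le> 1 (where the
  defining series converges for s \<ge> 2): Li_s(z) = sum over m \<ge> 1 of z^m / m^s.\<close>
definition polylog :: "nat \<Rightarrow> real \<Rightarrow> real" where
  "polylog s z = (\<Sum>m. z ^ Suc m / (real (Suc m)) ^ s)"

definition zeta_nat :: "nat \<Rightarrow> real" where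
  "zeta_nat s = (\<Sum>m. 1 / (real (Suc m)) ^ s)"

end

theory Submission
  imports Defs
begin

(*
  Expanding Li_4(-x) and integrating termwise with the help of
  int_0^1 (-x)^n / (1 + x) dx = ln 2 + A(n),  A(n) = sum_{j=1..n} (-1)^j / j,
  turns the integral into ln 2 zeta(4) + Z(5) + S, where Z(k) = sum_{n>=1} (-1)^n / n^k
  and S = sum_{0<m<n} (-1)^m / (m n^4).  The Euler sum S is found by evaluating
  T = sum_{m,k>=1} (-1)^k / (k m^3 (m + k)) in two ways.  Summing over k first gives,
  via the alternating harmonic series, ln 2 (Z(4) - zeta(4)) + zeta(5) + S' with
  S' = sum_{0<m<n} (-1)^(m+n) / (m n^4).  Decomposing 1 / (k m^3 (m + k)) into partial
  fractions in k and m + k gives S + S' + Z(2) Z(3) - zeta(5), where the last two terms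
  come from splitting the product Z(2) Z(3) along m < n, m > n and m = n.  So S' cancels,
  and Z(k) = (2^(1-k) - 1) zeta(k) finishes the computation.
*)

section \<open>Series over the positive integers\<close>

lemma has_sum_Suc_iff_atLeast_1:
  "((\<lambda>n. f (Suc n)) has_sum S) UNIV \<longleftrightarrow> (f has_sum S) {1..}"
  by (rule has_sum_reindex_bij_witness[where i="\<lambda>n. n - 1" and j=Suc]) auto

lemma has_sum_atLeast_1_imp_sums: "(f has_sum S) {1..} \<Longrightarrow> (\<lambda>n. f (Suc n)) sums S"
  by (rule has_sum_imp_sums) (rule has_sum_Suc_iff_atLeast_1[THEN iffD2])

lemma has_sum_atLeast_1_if_sums:
  fixes f :: "nat \<Rightarrow> real"
  assumes "f summable_on {1..}" and "(\<lambda>n. f (Suc n)) sums S"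
  shows "(f has_sum S) {1..}"
proof -
  have "(f has_sum infsum f {1..}) {1..}"
    using assms(1) by (rule has_sum_infsum)
  moreover have "infsum f {1..} = S"
    using has_sum_atLeast_1_imp_sums[OF calculation] assms(2) by (rule sums_unique2)
  ultimately show ?thesis by simp
qed

lemma summable_inverse_power_Suc:
  assumes "2 \<le> k"
  shows "summable (\<lambda>n. 1 / real (Suc n) ^ k)"
  using inverse_power_summable[OF assms, where 'a=real]
  by (subst summable_Suc_iff) (simp add: divide_inverse)

lemma zeta_nat_has_sum:
  assumes "2 \<le> k"
  shows "((\<lambda>n. 1 / real n ^ k) has_sum zeta_nat k) {1..}"
proof -
  have "((\<lambda>n. 1 / real (Suc n) ^ k) has_sum zeta_nat k) UNIV"
    using summable_inverse_power_Suc[OF assms]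
    unfolding zeta_nat_def by (intro norm_summable_imp_has_sum summable_sums) auto
  then show ?thesis by (rule has_sum_Suc_iff_atLeast_1[THEN iffD1])
qed

lemma summable_on_atLeast_1_if_inverse_square_bound:
  fixes f :: "nat \<Rightarrow> real"
  assumes "\<And>n. 1 \<le> n \<Longrightarrow> \<bar>f n\<bar> \<le> B / real n ^ 2"
  shows "f summable_on {1..}"
proof -
  have "(\<lambda>n. B * (1 / real n ^ 2)) summable_on {1..}"
    using zeta_nat_has_sum[of 2] by (intro summable_on_cmult_right has_sum_imp_summable) simp
  then have "(\<lambda>n. norm (f n)) summable_on {1..}"
  proof (rule summable_on_comparison_test)
    fix n :: nat assume "n \<in> {1..}"
    then show "norm (f n) \<le> B * (1 / real n ^ 2)" using assms[of n] by simp
  qed simp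
  then show ?thesis by (rule summable_on_iff_abs_summable_on_real[THEN iffD2])
qed

lemma has_sum_product_real:
  fixes a b :: "_ \<Rightarrow> real"
  assumes "(a has_sum A) X" and "(b has_sum B) Y"
  shows "((\<lambda>(x, y). a x * b y) has_sum A * B) (X \<times> Y)"
proof (rule has_sum_SigmaI[where g="\<lambda>x. a x * B"])
  show "((\<lambda>y. case (x, y) of (x, y) \<Rightarrow> a x * b y) has_sum a x * B) Y" for x
    using has_sum_cmult_right[OF assms(2)] by simp
  show "((\<lambda>x. a x * B) has_sum A * B) X"
    using assms(1) by (rule has_sum_cmult_left)
  have a: "(\<lambda>x. norm (a x)) summable_on X" and b: "(\<lambda>y. norm (b y)) summable_on Y"
    using assms by (metis has_sum_imp_summable summable_on_iff_abs_summable_on_real)+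
  have "(\<lambda>(x, y). norm (a x) * norm (b y)) summable_on X \<times> Y"
  proof (rule summable_on_SigmaI[where g="\<lambda>x. norm (a x) * infsum (\<lambda>y. norm (b y)) Y"])
    show "((\<lambda>y. case (x, y) of (x, y) \<Rightarrow> norm (a x) * norm (b y)) has_sum
            norm (a x) * infsum (\<lambda>y. norm (b y)) Y) Y" for x
      using has_sum_cmult_right[OF has_sum_infsum[OF b]] by simp
    show "(\<lambda>x. norm (a x) * infsum (\<lambda>y. norm (b y)) Y) summable_on X"
      using a by (rule summable_on_cmult_left)
  qed simp
  then have "(\<lambda>p. norm (case p of (x, y) \<Rightarrow> a x * b y)) summable_on X \<times> Y"
    by (simp add: case_prod_unfold abs_mult)
  then show "(\<lambda>(x, y). a x * b y) summable_on X \<times> Y"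
    by (rule summable_on_iff_abs_summable_on_real[THEN iffD2])
qed

lemma neg_one_power_mult_power_add: "(-1 :: 'a :: ring_1) ^ m * (-1) ^ (m + k) = (-1) ^ k"
proof -
  have "(-1 :: 'a) ^ m * (-1) ^ m = 1"
    by (simp flip: power_add)
  then show ?thesis
    by (simp add: power_add flip: mult.assoc)
qed

section \<open>Alternating zeta values and alternating harmonic numbers\<close>

(* Sign convention: alt_zeta k is minus the Dirichlet eta function at k. *)
definition alt_zeta :: "nat \<Rightarrow> real" where
  "alt_zeta k = (\<Sum>\<^sub>\<infinity>n\<in>{1..}. (-1) ^ n / real n ^ k)"

lemma alt_zeta_has_sum:
  assumes "2 \<le> k"
  shows "((\<lambda>n. (-1) ^ n / real n ^ k) has_sum alt_zeta k) {1..}"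
proof -
  have "\<bar>(-1) ^ n / real n ^ k\<bar> \<le> 1 / real n ^ 2" if "1 \<le> n" for n
    using that assms by (simp add: abs_divide power_abs divide_left_mono power_increasing)
  then have "(\<lambda>n. (-1) ^ n / real n ^ k) summable_on {1..}"
    by (rule summable_on_atLeast_1_if_inverse_square_bound)
  then show ?thesis unfolding alt_zeta_def by (rule has_sum_infsum)
qed

lemma alt_zeta_eq_zeta_nat:
  assumes k: "2 \<le> k"
  shows "alt_zeta k = (2 / 2 ^ k - 1) * zeta_nat k"
proof -
  define h where "h n = 1 / real n ^ k + (-1) ^ n / real n ^ k" for n
  have "(h has_sum (zeta_nat k + alt_zeta k)) {1..}"
    unfolding h_def by (intro has_sum_add zeta_nat_has_sum alt_zeta_has_sum k)
  moreover have "(h has_sum (2 / 2 ^ k * zeta_nat k)) {1..}"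
  proof -
    have "((\<lambda>j. 2 / 2 ^ k * (1 / real j ^ k)) has_sum (2 / 2 ^ k * zeta_nat k)) {1..}"
      by (intro has_sum_cmult_right zeta_nat_has_sum k)
    then have "((h \<circ> (*) 2) has_sum (2 / 2 ^ k * zeta_nat k)) {1..}"
      by (rule has_sum_cong[THEN iffD1, rotated]) (simp add: h_def power_mult_distrib)
    then have "(h has_sum (2 / 2 ^ k * zeta_nat k)) ((*) 2 ` {1..})"
      by (subst has_sum_reindex) (auto simp: inj_on_def)
    moreover have "h n = 0" if "n \<in> {1..} - (*) 2 ` {1..}" for n
    proof -
      have "odd n"
        using that by (auto elim!: evenE)
      then show ?thesis by (simp add: h_def)
    qed
    ultimately show ?thesis
      by (rule has_sum_cong_neutral[THEN iffD1, rotated -1]) auto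
  qed
  ultimately show ?thesis
    using has_sum_unique by (fastforce simp: algebra_simps)
qed

definition alt_harmonic :: "nat \<Rightarrow> real" where
  "alt_harmonic n = (\<Sum>j=1..n. (-1) ^ j / real j)"

lemma alt_harmonic_Suc: "alt_harmonic (Suc n) = alt_harmonic n + (-1) ^ Suc n / real (Suc n)"
  unfolding alt_harmonic_def by simp

lemma alt_harmonic_eq_sum_lessThan:
  assumes "1 \<le> n"
  shows "alt_harmonic n = (\<Sum>j\<in>{1..<n}. (-1) ^ j / real j) + (-1) ^ n / real n"
  using assms unfolding alt_harmonic_def by (simp add: sum.last_plus add.commute)

lemma alt_harmonic_tail_sums:
  "(\<lambda>k. (-1) ^ Suc (k + n) / real (Suc (k + n))) sums (- ln 2 - alt_harmonic n)"
proof -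
  have "(\<lambda>k. (-1) ^ Suc k / real (Suc k)) sums (- ln 2)"
    using sums_minus[OF alternating_harmonic_series_sums] by simp
  from sums_split_initial_segment[OF this, of n]
  have "(\<lambda>k. (-1) ^ Suc (k + n) / real (Suc (k + n))) sums
          (- ln 2 - (\<Sum>k<n. (-1) ^ Suc k / real (Suc k)))" .
  moreover have "(\<Sum>k<n. (-1) ^ Suc k / real (Suc k)) = alt_harmonic n"
    by (induction n) (simp_all add: alt_harmonic_Suc alt_harmonic_def)
  ultimately show ?thesis by simp
qed

section \<open>The integral as a series\<close>

lemma has_integral_neg_power_div_one_plus:
  "((\<lambda>x::real. (- x) ^ n / (1 + x)) has_integral (ln 2 + alt_harmonic n)) {0..1}"
proof (induction n)
  case 0
  have "((\<lambda>x::real. 1 / (1 + x)) has_integral (ln (1 + 1) - ln (1 + 0))) {0..1}"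
    by (intro fundamental_theorem_of_calculus)
      (auto intro!: derivative_eq_intros simp: has_real_derivative_iff_has_vector_derivative[symmetric])
  then show ?case by (simp add: alt_harmonic_def)
next
  case (Suc n)
  have "((\<lambda>x. x ^ Suc n / real (Suc n)) has_real_derivative x ^ n) (at x within {0..1})"
    for x :: real
    using DERIV_cdivide[OF DERIV_pow[of "Suc n"], of "real (Suc n)"] by simp
  then have "((\<lambda>x::real. x ^ n) has_integral 1 / real (Suc n)) {0..1}"
    using fundamental_theorem_of_calculus[of 0 1 "\<lambda>x. x ^ Suc n / real (Suc n)" "\<lambda>x. x ^ n"]
    by (simp add: has_real_derivative_iff_has_vector_derivative)
  then have "((\<lambda>x::real. (-1) ^ n * x ^ n) has_integral (-1) ^ n * (1 / real (Suc n))) {0..1}"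
    by (rule has_integral_cmult_real)
  then have "((\<lambda>x::real. (- x) ^ n) has_integral (-1) ^ n / real (Suc n)) {0..1}"
    by (simp flip: power_minus)
  from has_integral_diff[OF Suc.IH this]
  have "((\<lambda>x::real. (- x) ^ n / (1 + x) - (- x) ^ n) has_integral
          ln 2 + alt_harmonic n - (-1) ^ n / real (Suc n)) {0..1}" .
  moreover have "(- x) ^ n / (1 + x) - (- x) ^ n = (- x) ^ Suc n / (1 + x)" if "x \<in> {0..1}" for x :: real
  proof -
    have "y / (1 + x) - y = (- x) * y / (1 + x)" for y
      using that by (simp add: field_simps)
    then show ?thesis by (simp only: power_Suc)
  qed
  ultimately have "((\<lambda>x::real. (- x) ^ Suc n / (1 + x)) has_integral
      ln 2 + alt_harmonic n - (-1) ^ n / real (Suc n)) {0..1}"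
    by (rule has_integral_cong[THEN iffD1, rotated])
  moreover have "ln 2 + alt_harmonic n - (-1) ^ n / real (Suc n) = ln 2 + alt_harmonic (Suc n)"
    by (simp add: alt_harmonic_Suc)
  ultimately show ?case by (simp only:)
qed

lemma polylog_term_bound:
  assumes "\<bar>z\<bar> \<le> 1"
  shows "\<bar>z ^ Suc m / real (Suc m) ^ s\<bar> \<le> 1 / real (Suc m) ^ s"
proof -
  have "\<bar>z\<bar> ^ Suc m \<le> 1"
    using assms by (intro power_le_one) auto
  then show ?thesis
    by (simp add: abs_divide power_abs divide_right_mono del: power_Suc)
qed

lemma polylog_sums:
  assumes "2 \<le> s" and "\<bar>z\<bar> \<le> 1"
  shows "(\<lambda>m. z ^ Suc m / real (Suc m) ^ s) sums polylog s z"
proof -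
  have "summable (\<lambda>m. z ^ Suc m / real (Suc m) ^ s)"
    using summable_inverse_power_Suc[OF assms(1)]
    by (rule summable_comparison_test') (use polylog_term_bound[OF assms(2)] in auto)
  then show ?thesis
    unfolding polylog_def by (rule summable_sums)
qed

lemma abs_polylog_partial_sum_le_zeta_nat:
  assumes "2 \<le> s" and "\<bar>z\<bar> \<le> 1"
  shows "\<bar>\<Sum>m<n. z ^ Suc m / real (Suc m) ^ s\<bar> \<le> zeta_nat s"
proof -
  have "\<bar>\<Sum>m<n. z ^ Suc m / real (Suc m) ^ s\<bar> \<le> (\<Sum>m<n. 1 / real (Suc m) ^ s)"
    by (intro order.trans[OF sum_abs] sum_mono polylog_term_bound assms(2))
  also have "\<dots> \<le> zeta_nat s"
    unfolding zeta_nat_def by (intro sum_le_suminf summable_inverse_power_Suc assms(1)) auto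
  finally show ?thesis .
qed

lemma integral_polylog_neg_div_one_plus_sums:
  assumes s: "2 \<le> s"
  shows "(\<lambda>m. (ln 2 + alt_harmonic (Suc m)) / real (Suc m) ^ s)
           sums integral {0..1} (\<lambda>x. polylog s (- x) / (1 + x))"
proof -
  define f where "f n x = (\<Sum>m<n. (- x) ^ Suc m / real (Suc m) ^ s) / (1 + x)" for n and x :: real
  have "((\<lambda>x. 1 / real (Suc m) ^ s * ((- x) ^ Suc m / (1 + x))) has_integral
      1 / real (Suc m) ^ s * (ln 2 + alt_harmonic (Suc m))) {0..1}" for m
    by (intro has_integral_cmult_real has_integral_neg_power_div_one_plus)
  then have partial_integrals:
    "(f n has_integral (\<Sum>m<n. (ln 2 + alt_harmonic (Suc m)) / real (Suc m) ^ s)) {0..1}" for n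
    unfolding f_def sum_divide_distrib by (intro has_integral_sum) auto
  have "(\<lambda>n. f n x) \<longlonglongrightarrow> polylog s (- x) / (1 + x)" if "x \<in> {0..1}" for x
    using polylog_sums[OF s, of "- x"] that
    unfolding f_def sums_def by (intro tendsto_divide tendsto_const) auto
  moreover have "norm (f n x) \<le> zeta_nat s" if "x \<in> {0..1}" for n x
  proof -
    have "\<bar>\<Sum>m<n. (- x) ^ Suc m / real (Suc m) ^ s\<bar> / (1 + x) \<le> \<bar>\<Sum>m<n. (- x) ^ Suc m / real (Suc m) ^ s\<bar>"
      using that divide_left_mono[of 1 "1 + x"] by simp
    with abs_polylog_partial_sum_le_zeta_nat[OF s, of "- x" n] that show ?thesis
      by (simp add: f_def abs_divide)
  qed
  ultimately have "(\<lambda>n. integral {0..1} (f n)) \<longlonglongrightarrow> integral {0..1} (\<lambda>x. polylog s (- x) / (1 + x))"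
    using partial_integrals
    by (intro dominated_convergence(2)[where h="\<lambda>_. zeta_nat s"]) (blast intro: has_integral_integrable)+
  then show ?thesis
    using partial_integrals[THEN integral_unique] by (simp add: sums_def)
qed

section \<open>Double sums over 0 < m < n\<close>

definition double_sum :: "(nat \<Rightarrow> real) \<Rightarrow> (nat \<Rightarrow> real) \<Rightarrow> real" where
  "double_sum a b = (\<Sum>\<^sub>\<infinity>n\<in>{1..}. b n * (\<Sum>m\<in>{1..<n}. a m))"

lemma has_sum_double_sum_rows:
  fixes a b :: "nat \<Rightarrow> real"
  assumes "((\<lambda>(m, k). a m * b (m + k)) has_sum S) ({1..} \<times> {1..})"
  shows "((\<lambda>n. b n * (\<Sum>m\<in>{1..<n}. a m)) has_sum S) {1..}"
proof -
  have "((\<lambda>(n, m). a m * b n) has_sum S) (Sigma {1..} (\<lambda>n. {1..<n}))"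
    using assms
    by (subst (asm) has_sum_reindex_bij_witness[where i="\<lambda>(n, m). (m, n - m)" and j="\<lambda>(m, k). (m + k, m)"
          and T="Sigma {1..} (\<lambda>n. {1..<n})" and h="\<lambda>(n, m). a m * b n"]) auto
  then show ?thesis
    by (rule has_sum_SigmaD) (simp add: sum_distrib_left mult.commute)
qed

lemma double_sum_eq:
  fixes a b :: "nat \<Rightarrow> real"
  assumes "((\<lambda>(m, k). a m * b (m + k)) has_sum S) ({1..} \<times> {1..})"
  shows "double_sum a b = S"
  using has_sum_double_sum_rows[OF assms] unfolding double_sum_def by (rule infsumI)

lemma has_sum_double_sum:
  fixes a b :: "nat \<Rightarrow> real"
  assumes "(\<lambda>(m, k). a m * b (m + k)) summable_on {1..} \<times> {1..}"
  shows "((\<lambda>(m, k). a m * b (m + k)) has_sum double_sum a b) ({1..} \<times> {1..})"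
  using has_sum_infsum[OF assms] double_sum_eq[OF has_sum_infsum[OF assms]] by simp

lemma square_mult_square_le_power_mult_power:
  fixes m k :: nat
  assumes "1 \<le> m" and "(2 - p) + 2 \<le> r"
  shows "m ^ 2 * k ^ 2 \<le> m ^ p * (m + k) ^ r"
proof -
  have "m ^ 2 \<le> m ^ p * (m + k) ^ (2 - p)"
  proof (cases "2 \<le> p")
    case True
    then have "m ^ 2 \<le> m ^ p" using assms(1) by (intro power_increasing) auto
    with True show ?thesis by simp
  next
    case False
    then have "m ^ 2 = m ^ p * m ^ (2 - p)" by (simp flip: power_add)
    also have "\<dots> \<le> m ^ p * (m + k) ^ (2 - p)" by (intro mult_left_mono power_mono) auto
    finally show ?thesis .
  qed
  moreover have "k ^ 2 \<le> (m + k) ^ 2" by (intro power_mono) auto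
  ultimately have "m ^ 2 * k ^ 2 \<le> m ^ p * (m + k) ^ (2 - p) * (m + k) ^ 2"
    by (intro mult_mono) auto
  also have "\<dots> = m ^ p * (m + k) ^ ((2 - p) + 2)" by (simp only: power_add mult.assoc)
  also have "\<dots> \<le> m ^ p * (m + k) ^ r"
    using assms by (intro mult_left_mono power_increasing) auto
  finally show ?thesis .
qed

(* The subtraction 2 - p is truncated, so for p >= 2 the last condition is just 2 <= r. *)
lemma summable_on_double_sum_if_power_bounds:
  fixes a b :: "nat \<Rightarrow> real"
  assumes a: "\<And>m. 1 \<le> m \<Longrightarrow> \<bar>a m\<bar> \<le> 1 / real m ^ p"
    and b: "\<And>n. 1 \<le> n \<Longrightarrow> \<bar>b n\<bar> \<le> 1 / real n ^ r"
    and pr: "(2 - p) + 2 \<le> r"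
  shows "(\<lambda>(m, k). a m * b (m + k)) summable_on {1..} \<times> {1..}"
proof -
  have "((\<lambda>(m, k). 1 / real m ^ 2 * (1 / real k ^ 2)) has_sum zeta_nat 2 * zeta_nat 2) ({1..} \<times> {1..})"
    by (intro has_sum_product_real zeta_nat_has_sum) auto
  then have "(\<lambda>(m, k). 1 / real m ^ 2 * (1 / real k ^ 2)) summable_on {1..} \<times> {1..}"
    by (rule has_sum_imp_summable)
  then have "(\<lambda>p. norm (case p of (m, k) \<Rightarrow> a m * b (m + k))) summable_on {1..} \<times> {1..}"
  proof (rule summable_on_comparison_test)
    fix q assume "q \<in> {1::nat..} \<times> {1::nat..}"
    then obtain m k where q: "q = (m, k)" "1 \<le> m" "1 \<le> k" by auto
    have "real (m ^ 2 * k ^ 2) \<le> real (m ^ p * (m + k) ^ r)"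
      using square_mult_square_le_power_mult_power[OF q(2) pr, of k] of_nat_mono by blast
    then have "1 / (real m ^ p * real (m + k) ^ r) \<le> 1 / (real m ^ 2 * real k ^ 2)"
      using q by (intro divide_left_mono) auto
    moreover have "\<bar>a m * b (m + k)\<bar> \<le> 1 / real m ^ p * (1 / real (m + k) ^ r)"
      unfolding abs_mult using q by (intro mult_mono a b) auto
    ultimately show "norm (case q of (m, k) \<Rightarrow> a m * b (m + k)) \<le>
        (case q of (m, k) \<Rightarrow> 1 / real m ^ 2 * (1 / real k ^ 2))"
      using q by simp
  qed simp
  then show ?thesis by (rule summable_on_iff_abs_summable_on_real[THEN iffD2])
qed

lemma has_sum_alt_double_sum:
  assumes "(2 - p) + 2 \<le> r"
  shows "((\<lambda>(m, k). (-1) ^ m / real m ^ p * ((-1) ^ (m + k) / real (m + k) ^ r)) has_sum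
           double_sum (\<lambda>m. (-1) ^ m / real m ^ p) (\<lambda>n. (-1) ^ n / real n ^ r)) ({1..} \<times> {1..})"
  by (intro has_sum_double_sum summable_on_double_sum_if_power_bounds[OF _ _ assms])
    (auto simp: abs_divide)

lemma double_sum_stuffle:
  fixes a b :: "nat \<Rightarrow> real"
  assumes "(a has_sum A) {1..}" and "(b has_sum B) {1..}"
  shows "A * B = double_sum a b + double_sum b a + (\<Sum>\<^sub>\<infinity>n\<in>{1..}. a n * b n)"
proof -
  define F where "F = (\<lambda>(m, n). a m * b n)"
  define P :: "(nat \<times> nat) set" where "P = {1..} \<times> {1..}"
  define L where "L = {(m, n) \<in> P. m < n}"
  define U where "U = {(m, n) \<in> P. n < m}"
  define D where "D = {(m, n) \<in> P. m = n}"
  have F: "(F has_sum A * B) P"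
    unfolding F_def P_def using assms by (rule has_sum_product_real)
  have summable: "F summable_on X" if "X \<subseteq> P" for X
    using summable_on_subset_banach[OF has_sum_imp_summable[OF F] that] .
  have L: "(F has_sum infsum F L) L" and U: "(F has_sum infsum F U) U" and D: "(F has_sum infsum F D) D"
    by (intro has_sum_infsum summable; force simp: L_def U_def D_def)+
  have "double_sum a b = infsum F L"
  proof (rule double_sum_eq)
    show "((\<lambda>(m, k). a m * b (m + k)) has_sum infsum F L) ({1..} \<times> {1..})"
      using L by (subst has_sum_reindex_bij_witness[where i="\<lambda>(m, n). (m, n - m)" and j="\<lambda>(m, k). (m, m + k)"
          and T=L and h=F]) (auto simp: L_def P_def F_def)
  qed
  moreover have "double_sum b a = infsum F U"
  proof (rule double_sum_eq)
    show "((\<lambda>(n, k). b n * a (n + k)) has_sum infsum F U) ({1..} \<times> {1..})"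
      using U by (subst has_sum_reindex_bij_witness[where i="\<lambda>(m, n). (n, m - n)" and j="\<lambda>(n, k). (n + k, n)"
          and T=U and h=F]) (auto simp: U_def P_def F_def)
  qed
  moreover have "(\<Sum>\<^sub>\<infinity>n\<in>{1..}. a n * b n) = infsum F D"
  proof (rule infsumI)
    show "((\<lambda>n. a n * b n) has_sum infsum F D) {1..}"
      using D by (subst has_sum_reindex_bij_witness[where i=fst and j="\<lambda>n. (n, n)"
          and T=D and h=F]) (auto simp: D_def P_def F_def)
  qed
  moreover have "(F has_sum (infsum F L + infsum F U + infsum F D)) (L \<union> U \<union> D)"
    using L U D by (intro has_sum_Un_disjoint) (auto simp: L_def U_def D_def)
  moreover have "L \<union> U \<union> D = P"
    by (auto simp: P_def L_def U_def D_def)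
  ultimately show ?thesis
    using has_sum_unique[OF F] by simp
qed

lemma has_sum_weighted_alt_harmonic:
  fixes w :: "nat \<Rightarrow> real"
  assumes "(w has_sum W) {1..}"
    and "((\<lambda>n. w n * ((-1) ^ n / real n)) has_sum V) {1..}"
    and "(\<lambda>(m, k). (-1) ^ m / real m * w (m + k)) summable_on {1..} \<times> {1..}"
  shows "((\<lambda>n. w n * (ln 2 + alt_harmonic n)) has_sum
           ln 2 * W + double_sum (\<lambda>m. (-1) ^ m / real m) w + V) {1..}"
proof -
  have "((\<lambda>n. ln 2 * w n + w n * (\<Sum>m\<in>{1..<n}. (-1) ^ m / real m) + w n * ((-1) ^ n / real n))
          has_sum ln 2 * W + double_sum (\<lambda>m. (-1) ^ m / real m) w + V) {1..}"
    by (intro has_sum_add has_sum_cmult_right assms(1,2) has_sum_double_sum_rows has_sum_double_sum assms(3))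
  then show ?thesis
    by (rule has_sum_cong[THEN iffD1, rotated]) (simp add: alt_harmonic_eq_sum_lessThan algebra_simps)
qed

section \<open>An alternating Tornheim sum\<close>

lemma has_sum_alt_div_mult_add:
  assumes m: "1 \<le> m"
  shows "((\<lambda>k. (-1) ^ k / (real k * real (m + k))) has_sum
           ((-1) ^ m * (ln 2 + alt_harmonic m) - ln 2) / real m) {1..}"
proof (rule has_sum_atLeast_1_if_sums)
  have "\<bar>(-1) ^ k / (real k * real (m + k))\<bar> \<le> 1 / real k ^ 2" if "1 \<le> k" for k
    using that by (simp add: abs_divide power2_eq_square divide_left_mono mult_left_mono)
  then show "(\<lambda>k. (-1) ^ k / (real k * real (m + k))) summable_on {1..}"
    by (rule summable_on_atLeast_1_if_inverse_square_bound)
  have "(\<lambda>i. (-1) ^ Suc i / real (Suc i)) sums (- ln 2)"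
    using alt_harmonic_tail_sums[of 0] by (simp add: alt_harmonic_def)
  moreover have "(\<lambda>i. (-1) ^ Suc i / real (m + Suc i)) sums ((-1) ^ m * (- ln 2 - alt_harmonic m))"
  proof -
    have "(-1) ^ m * ((-1) ^ Suc (i + m) / real (Suc (i + m))) = (-1) ^ Suc i / real (m + Suc i)" for i
      using neg_one_power_mult_power_add[of m "Suc i", where 'a=real] by (simp add: add.commute)
    then show ?thesis
      using sums_mult[OF alt_harmonic_tail_sums[of m], of "(-1) ^ m"] by simp
  qed
  ultimately have "(\<lambda>i. 1 / real m * ((-1) ^ Suc i / real (Suc i) - (-1) ^ Suc i / real (m + Suc i)))
      sums (1 / real m * (- ln 2 - (-1) ^ m * (- ln 2 - alt_harmonic m)))"
    by (intro sums_mult sums_diff)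
  moreover have partial_fraction:
    "1 / real m * (c / j - c / (real m + j)) = c / (j * (real m + j))" if "0 < j" for c j :: real
    using m that by (simp add: field_simps)
  then have terms: "(\<lambda>i. 1 / real m * ((-1) ^ Suc i / real (Suc i) - (-1) ^ Suc i / real (m + Suc i))) =
      (\<lambda>i. (-1) ^ Suc i / (real (Suc i) * real (m + Suc i)))"
    unfolding of_nat_add by (intro ext partial_fraction) simp
  moreover have sum: "1 / real m * (- ln 2 - (-1) ^ m * (- ln 2 - alt_harmonic m)) =
      ((-1) ^ m * (ln 2 + alt_harmonic m) - ln 2) / real m"
    by (simp add: field_simps)
  ultimately show "(\<lambda>i. (-1) ^ Suc i / (real (Suc i) * real (m + Suc i))) sums
      (((-1) ^ m * (ln 2 + alt_harmonic m) - ln 2) / real m)"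
    by (simp only: terms sum)
qed

lemma tornheim_partial_fraction:
  fixes a b :: real
  assumes "0 < a" and "0 < b"
  shows "1 / (a * b ^ 3 * (b + a)) =
    1 / (a * (b + a) ^ 4) + 1 / (b * (b + a) ^ 4) + 1 / (b ^ 2 * (b + a) ^ 3) + 1 / (b ^ 3 * (b + a) ^ 2)"
proof -
  define N where "N = b + a"
  have "0 < N" using assms by (simp add: N_def)
  have "b ^ 3 + a * b ^ 2 + a * b * N + a * N ^ 2 = N ^ 3"
    unfolding N_def by (simp add: power2_eq_square power3_eq_cube algebra_simps)
  then show ?thesis
    using assms \<open>0 < N\<close> unfolding N_def[symmetric]
    by (simp add: field_simps power2_eq_square power3_eq_cube power4_eq_xxxx)
qed

lemma alt_tornheim_split:
  assumes "1 \<le> m" and "1 \<le> k"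
  shows "(-1) ^ k / (real k * real m ^ 3 * real (m + k)) =
    (-1) ^ k / real k * (1 / real (k + m) ^ 4)
    + (-1) ^ m / real m * ((-1) ^ (m + k) / real (m + k) ^ 4)
    + (-1) ^ m / real m ^ 2 * ((-1) ^ (m + k) / real (m + k) ^ 3)
    + (-1) ^ m / real m ^ 3 * ((-1) ^ (m + k) / real (m + k) ^ 2)"
proof -
  have split: "1 / (real k * real m ^ 3 * real (m + k)) =
      1 / (real k * real (m + k) ^ 4) + 1 / (real m * real (m + k) ^ 4)
      + 1 / (real m ^ 2 * real (m + k) ^ 3) + 1 / (real m ^ 3 * real (m + k) ^ 2)"
    using tornheim_partial_fraction[of "real k" "real m"] assms by simp
  have "(-1) ^ k / real k * (1 / real (k + m) ^ 4)
    + (-1) ^ m / real m * ((-1) ^ (m + k) / real (m + k) ^ 4)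
    + (-1) ^ m / real m ^ 2 * ((-1) ^ (m + k) / real (m + k) ^ 3)
    + (-1) ^ m / real m ^ 3 * ((-1) ^ (m + k) / real (m + k) ^ 2) =
      (-1) ^ k * (1 / (real k * real (m + k) ^ 4) + 1 / (real m * real (m + k) ^ 4)
      + 1 / (real m ^ 2 * real (m + k) ^ 3) + 1 / (real m ^ 3 * real (m + k) ^ 2))"
    by (simp add: add.commute[of k m] ring_distribs neg_one_power_mult_power_add)
  also have "\<dots> = (-1) ^ k / (real k * real m ^ 3 * real (m + k))"
    by (simp only: split[symmetric]) simp
  finally show ?thesis ..
qed

lemma alt_zeta_2_mult_alt_zeta_3:
  "alt_zeta 2 * alt_zeta 3 =
     double_sum (\<lambda>m. (-1) ^ m / real m ^ 2) (\<lambda>n. (-1) ^ n / real n ^ 3)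
     + double_sum (\<lambda>m. (-1) ^ m / real m ^ 3) (\<lambda>n. (-1) ^ n / real n ^ 2) + zeta_nat 5"
proof -
  have "((\<lambda>n. (-1) ^ n / real n ^ 2 * ((-1) ^ n / real n ^ 3)) has_sum zeta_nat 5) {1..}"
    using zeta_nat_has_sum[of 5] by (simp flip: power_add)
  then have "(\<Sum>\<^sub>\<infinity>n\<in>{1..}. (-1) ^ n / real n ^ 2 * ((-1) ^ n / real n ^ 3)) = zeta_nat 5"
    by (rule infsumI)
  moreover have "alt_zeta 2 * alt_zeta 3 =
      double_sum (\<lambda>m. (-1) ^ m / real m ^ 2) (\<lambda>n. (-1) ^ n / real n ^ 3)
      + double_sum (\<lambda>m. (-1) ^ m / real m ^ 3) (\<lambda>n. (-1) ^ n / real n ^ 2)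
      + (\<Sum>\<^sub>\<infinity>n\<in>{1..}. (-1) ^ n / real n ^ 2 * ((-1) ^ n / real n ^ 3))"
    by (intro double_sum_stuffle alt_zeta_has_sum) auto
  ultimately show ?thesis by simp
qed

lemma alt_tornheim_has_sum_double_sums:
  "((\<lambda>(m, k). (-1) ^ k / (real k * real m ^ 3 * real (m + k))) has_sum
      double_sum (\<lambda>m. (-1) ^ m / real m) (\<lambda>n. 1 / real n ^ 4)
      + double_sum (\<lambda>m. (-1) ^ m / real m) (\<lambda>n. (-1) ^ n / real n ^ 4)
      + alt_zeta 2 * alt_zeta 3 - zeta_nat 5) ({1..} \<times> {1..})"
proof -
  have "((\<lambda>(m, k). (-1) ^ m / real m * (1 / real (m + k) ^ 4)) has_sum
      double_sum (\<lambda>m. (-1) ^ m / real m) (\<lambda>n. 1 / real n ^ 4)) ({1..} \<times> {1..})"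
    by (intro has_sum_double_sum summable_on_double_sum_if_power_bounds[where p=1 and r=4])
      (auto simp: abs_divide)
  from has_sum_swap[THEN iffD1, OF this]
  have t1: "((\<lambda>(m, k). (-1) ^ k / real k * (1 / real (k + m) ^ 4)) has_sum
      double_sum (\<lambda>m. (-1) ^ m / real m) (\<lambda>n. 1 / real n ^ 4)) ({1..} \<times> {1..})"
    by (simp add: case_prod_unfold)
  have t2: "((\<lambda>(m, k). (-1) ^ m / real m * ((-1) ^ (m + k) / real (m + k) ^ 4)) has_sum
      double_sum (\<lambda>m. (-1) ^ m / real m) (\<lambda>n. (-1) ^ n / real n ^ 4)) ({1..} \<times> {1..})"
    using has_sum_alt_double_sum[of 1 4] by simp
  have t3: "((\<lambda>(m, k). (-1) ^ m / real m ^ 2 * ((-1) ^ (m + k) / real (m + k) ^ 3)) has_sum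
      double_sum (\<lambda>m. (-1) ^ m / real m ^ 2) (\<lambda>n. (-1) ^ n / real n ^ 3)) ({1..} \<times> {1..})"
    by (rule has_sum_alt_double_sum) simp
  have t4: "((\<lambda>(m, k). (-1) ^ m / real m ^ 3 * ((-1) ^ (m + k) / real (m + k) ^ 2)) has_sum
      double_sum (\<lambda>m. (-1) ^ m / real m ^ 3) (\<lambda>n. (-1) ^ n / real n ^ 2)) ({1..} \<times> {1..})"
    by (rule has_sum_alt_double_sum) simp
  from has_sum_add[OF has_sum_add[OF has_sum_add[OF t1 t2] t3] t4]
  have "((\<lambda>(m, k). (-1) ^ k / (real k * real m ^ 3 * real (m + k))) has_sum
      double_sum (\<lambda>m. (-1) ^ m / real m) (\<lambda>n. 1 / real n ^ 4)
        + double_sum (\<lambda>m. (-1) ^ m / real m) (\<lambda>n. (-1) ^ n / real n ^ 4)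
        + double_sum (\<lambda>m. (-1) ^ m / real m ^ 2) (\<lambda>n. (-1) ^ n / real n ^ 3)
        + double_sum (\<lambda>m. (-1) ^ m / real m ^ 3) (\<lambda>n. (-1) ^ n / real n ^ 2)) ({1..} \<times> {1..})"
    by (rule has_sum_cong[THEN iffD1, rotated])
      (elim SigmaE, hypsubst, simp only: prod.case, rule alt_tornheim_split[symmetric]; simp)
  then show ?thesis
    by (simp add: alt_zeta_2_mult_alt_zeta_3 algebra_simps)
qed

lemma alt_tornheim_has_sum_iterated:
  "((\<lambda>(m, k). (-1) ^ k / (real k * real m ^ 3 * real (m + k))) has_sum
      ln 2 * alt_zeta 4 + double_sum (\<lambda>m. (-1) ^ m / real m) (\<lambda>n. (-1) ^ n / real n ^ 4)
      + zeta_nat 5 - ln 2 * zeta_nat 4) ({1..} \<times> {1..})"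
proof (rule has_sum_SigmaI[where g="\<lambda>m. 1 / real m ^ 3 * (((-1) ^ m * (ln 2 + alt_harmonic m) - ln 2) / real m)"])
  fix m :: nat assume "m \<in> {1..}"
  then have "((\<lambda>k. 1 / real m ^ 3 * ((-1) ^ k / (real k * real (m + k)))) has_sum
      1 / real m ^ 3 * (((-1) ^ m * (ln 2 + alt_harmonic m) - ln 2) / real m)) {1..}"
    by (intro has_sum_cmult_right has_sum_alt_div_mult_add) simp
  then show "((\<lambda>k. case (m, k) of (m, k) \<Rightarrow> (-1) ^ k / (real k * real m ^ 3 * real (m + k))) has_sum
      1 / real m ^ 3 * (((-1) ^ m * (ln 2 + alt_harmonic m) - ln 2) / real m)) {1..}"
    by (simp add: mult_ac)
next
  have "((\<lambda>n. (-1) ^ n / real n ^ 4 * ((-1) ^ n / real n)) has_sum zeta_nat 5) {1..}"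
    using zeta_nat_has_sum[of 5] by (simp flip: power_add power_Suc2)
  then have "((\<lambda>n. (-1) ^ n / real n ^ 4 * (ln 2 + alt_harmonic n)) has_sum
      ln 2 * alt_zeta 4 + double_sum (\<lambda>m. (-1) ^ m / real m) (\<lambda>n. (-1) ^ n / real n ^ 4)
      + zeta_nat 5) {1..}"
    by (intro has_sum_weighted_alt_harmonic alt_zeta_has_sum
        summable_on_double_sum_if_power_bounds[where p=1 and r=4]) (auto simp: abs_divide)
  from has_sum_add[OF this has_sum_cmult_right[OF zeta_nat_has_sum[of 4], of "- ln 2"]]
  have "((\<lambda>m. (-1) ^ m / real m ^ 4 * (ln 2 + alt_harmonic m) + - ln 2 * (1 / real m ^ 4)) has_sum
      ln 2 * alt_zeta 4 + double_sum (\<lambda>m. (-1) ^ m / real m) (\<lambda>n. (-1) ^ n / real n ^ 4)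
      + zeta_nat 5 - ln 2 * zeta_nat 4) {1..}"
    by simp
  moreover have "(-1) ^ m / real m ^ 4 * (ln 2 + alt_harmonic m) + - ln 2 * (1 / real m ^ 4) =
      1 / real m ^ 3 * (((-1) ^ m * (ln 2 + alt_harmonic m) - ln 2) / real m)" for m
    by (cases "m = 0") (simp_all add: field_simps eval_nat_numeral)
  ultimately show "((\<lambda>m. 1 / real m ^ 3 * (((-1) ^ m * (ln 2 + alt_harmonic m) - ln 2) / real m)) has_sum
      ln 2 * alt_zeta 4 + double_sum (\<lambda>m. (-1) ^ m / real m) (\<lambda>n. (-1) ^ n / real n ^ 4)
      + zeta_nat 5 - ln 2 * zeta_nat 4) {1..}"
    by simp
next
  show "(\<lambda>(m, k). (-1) ^ k / (real k * real m ^ 3 * real (m + k))) summable_on {1..} \<times> {1..}"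
    using alt_tornheim_has_sum_double_sums by (rule has_sum_imp_summable)
qed

lemma alt_euler_sum_1_4:
  "double_sum (\<lambda>m. (-1) ^ m / real m) (\<lambda>n. 1 / real n ^ 4) =
     2 * zeta_nat 5 - ln 2 * zeta_nat 4 + ln 2 * alt_zeta 4 - alt_zeta 2 * alt_zeta 3"
  using has_sum_unique[OF alt_tornheim_has_sum_iterated alt_tornheim_has_sum_double_sums] by simp

lemma integral_polylog_4_neg_div_one_plus:
  "integral {0..1} (\<lambda>x::real. polylog 4 (- x) / (1 + x)) =
     ln 2 * zeta_nat 4 + double_sum (\<lambda>m. (-1) ^ m / real m) (\<lambda>n. 1 / real n ^ 4) + alt_zeta 5"
proof -
  have "((\<lambda>n. 1 / real n ^ 4 * ((-1) ^ n / real n)) has_sum alt_zeta 5) {1..}"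
    using alt_zeta_has_sum[of 5] by (simp flip: power_Suc2)
  then have "((\<lambda>n. 1 / real n ^ 4 * (ln 2 + alt_harmonic n)) has_sum
      ln 2 * zeta_nat 4 + double_sum (\<lambda>m. (-1) ^ m / real m) (\<lambda>n. 1 / real n ^ 4) + alt_zeta 5) {1..}"
    by (intro has_sum_weighted_alt_harmonic zeta_nat_has_sum
        summable_on_double_sum_if_power_bounds[where p=1 and r=4]) (auto simp: abs_divide)
  from has_sum_atLeast_1_imp_sums[OF this]
  have "(\<lambda>m. (ln 2 + alt_harmonic (Suc m)) / real (Suc m) ^ 4) sums
      (ln 2 * zeta_nat 4 + double_sum (\<lambda>m. (-1) ^ m / real m) (\<lambda>n. 1 / real n ^ 4) + alt_zeta 5)"
    by simp
  with integral_polylog_neg_div_one_plus_sums[of 4] show ?thesis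
    by (simp add: sums_iff)
qed

theorem mainTheorem5:
  shows "integral {0..1} (\<lambda>x::real. polylog 4 (- x) / (1 + x))
    = 17/16 * zeta_nat 5 - 3/8 * zeta_nat 2 * zeta_nat 3 - 7/8 * ln 2 * zeta_nat 4"
proof -
  have "alt_zeta 2 = - 1/2 * zeta_nat 2" "alt_zeta 3 = - 3/4 * zeta_nat 3"
    "alt_zeta 4 = - 7/8 * zeta_nat 4" "alt_zeta 5 = - 15/16 * zeta_nat 5"
    by (simp_all add: alt_zeta_eq_zeta_nat)
  then show ?thesis
    unfolding integral_polylog_4_neg_div_one_plus alt_euler_sum_1_4 by (simp add: algebra_simps)
qed

end
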